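(* Let $\mathcal T=(T,\lambda)$ be a temporal oriented tree and let $u,v,w,x$ be pairwise distinct vertices of $T$ such that there is at least one temporal path from $u$ to $v$, at least one temporal path from $w$ to $x$, and every temporal path from $u$ to $v$ has a vertex in common with every temporal path from $w$ to $x$. Then there is a temporal path from $u$ to $x$ or a temporal path from $w$ to $v$.
   Context: A temporal digraph is a pair $(D,\lambda)$ with $D=(V,A)$ a finite digraph and $\lambda:A\to 2^{\{1,\dots,t_{\max}\}}$ giving the time-steps at which each arc is active. A temporal oriented tree $\mathcal T=(T,\lambda)$ is one whose underlying digraph $T$ is an orientation of a tree. A temporal path from $v_1$ to $v_k$ is a sequence $(v_1,v_2,t_1),\dots,(v_{k-1},v_k,t_{k-1})$ with pairwise distinct $v_i$, $\overrightarrow{v_iv_{i+1}}\in A$, $t_i\in\lambda(\overrightarrow{v_iv_{i+1}})$ and $t_1<\dots<t_{k-1}$ (strictly increasing). *)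

theory Defs
  imports Main
begin

definition temporal_digraph ::
  "'a set \<Rightarrow> ('a \<times> 'a) set \<Rightarrow> ('a \<times> 'a \<Rightarrow> nat set) \<Rightarrow> nat \<Rightarrow> bool" where
  "temporal_digraph V A lam tmax \<longleftrightarrow>
     finite V \<and> A \<subseteq> V \<times> V \<and> (\<forall>a\<in>A. lam a \<subseteq> {1..tmax})"

definition und_adj :: "('a \<times> 'a) set \<Rightarrow> 'a \<Rightarrow> 'a \<Rightarrow> bool" where
  "und_adj A x y \<longleftrightarrow> (x, y) \<in> A \<or> (y, x) \<in> A"

definition und_cycle :: "('a \<times> 'a) set \<Rightarrow> 'a list \<Rightarrow> bool" where
  "und_cycle A cs \<longleftrightarrow> length cs \<ge> 3 \<and> distinct cs \<and>
     (\<forall>i. Suc i < length cs \<longrightarrow> und_adj A (cs ! i) (cs ! Suc i)) \<and>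
     und_adj A (last cs) (hd cs)"

definition oriented_tree :: "'a set \<Rightarrow> ('a \<times> 'a) set \<Rightarrow> bool" where
  "oriented_tree V A \<longleftrightarrow>
     finite V \<and> V \<noteq> {} \<and> A \<subseteq> V \<times> V \<and>
     (\<forall>x y. (x, y) \<in> A \<longrightarrow> x \<noteq> y \<and> (y, x) \<notin> A) \<and>
     (\<forall>x\<in>V. \<forall>y\<in>V. (x, y) \<in> {(a, b). und_adj A a b}\<^sup>*) \<and>
     (\<nexists>cs. und_cycle A cs)"

definition temporal_oriented_tree ::
  "'a set \<Rightarrow> ('a \<times> 'a) set \<Rightarrow> ('a \<times> 'a \<Rightarrow> nat set) \<Rightarrow> nat \<Rightarrow> bool" where
  "temporal_oriented_tree V A lam tmax \<longleftrightarrow>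
     temporal_digraph V A lam tmax \<and> oriented_tree V A"

definition temporal_path ::
  "('a \<times> 'a) set \<Rightarrow> ('a \<times> 'a \<Rightarrow> nat set) \<Rightarrow> 'a list \<Rightarrow> nat list \<Rightarrow> bool" where
  "temporal_path A lam vs ts \<longleftrightarrow>
     vs \<noteq> [] \<and> length ts = length vs - 1 \<and> distinct vs \<and>
     (\<forall>i < length ts. (vs ! i, vs ! Suc i) \<in> A \<and> ts ! i \<in> lam (vs ! i, vs ! Suc i)) \<and>
     sorted_wrt (<) ts"

definition temporal_path_from_to ::
  "('a \<times> 'a) set \<Rightarrow> ('a \<times> 'a \<Rightarrow> nat set) \<Rightarrow> 'a \<Rightarrow> 'a \<Rightarrow> 'a list \<Rightarrow> nat list \<Rightarrow> bool" where
  "temporal_path_from_to A lam s t vs ts \<longleftrightarrow>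
     temporal_path A lam vs ts \<and> hd vs = s \<and> last vs = t"

end

theory Submission
  imports Defs
begin

text \<open>Let a be a vertex shared by a temporal u-v path P and a temporal w-x path Q. Along P the
  arrival at a precedes the departure from a, and likewise along Q. Hence either P arrives at a
  before Q leaves it, or Q arrives at a before P leaves it: otherwise
  arr P \<ge> dep Q > arr Q \<ge> dep P > arr P. In the first case the first half of P followed by the
  second half of Q is a temporal walk from u to x, in the second case the first half of Q
  followed by the second half of P is one from w to v; cutting out repeated vertices turns the
  walk into a temporal path. The argument works in every temporal digraph.\<close>

fun temporal_walk :: "('a \<times> 'a) set \<Rightarrow> ('a \<times> 'a \<Rightarrow> nat set) \<Rightarrow> 'a list \<Rightarrow> nat list \<Rightarrow> bool" where
  "temporal_walk A lam [v] [] = True"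
| "temporal_walk A lam (v # w # vs) (t # ts) \<longleftrightarrow>
     (v, w) \<in> A \<and> t \<in> lam (v, w) \<and> temporal_walk A lam (w # vs) ts \<and> (\<forall>t'\<in>set ts. t < t')"
| "temporal_walk A lam _ _ = False"

lemma temporal_path_iff_walk_distinct:
  "temporal_path A lam vs ts \<longleftrightarrow> temporal_walk A lam vs ts \<and> distinct vs"
proof (induction A lam vs ts rule: temporal_walk.induct)
  case (2 A lam v w vs t ts)
  have "(\<forall>i < length (t # ts). ((v # w # vs) ! i, (v # w # vs) ! Suc i) \<in> A \<and>
            (t # ts) ! i \<in> lam ((v # w # vs) ! i, (v # w # vs) ! Suc i)) \<longleftrightarrow>
        (v, w) \<in> A \<and> t \<in> lam (v, w) \<and>
        (\<forall>i < length ts. ((w # vs) ! i, (w # vs) ! Suc i) \<in> A \<and>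
            ts ! i \<in> lam ((w # vs) ! i, (w # vs) ! Suc i))"
    by (auto simp: less_Suc_eq_0_disj)
  with "2" show ?case
    unfolding temporal_path_def by auto
qed (auto simp: temporal_path_def)

lemma temporal_walk_singleton [simp]: "temporal_walk A lam [v] ts \<longleftrightarrow> ts = []"
  by (cases ts) auto

lemma temporal_walk_not_Nil: "temporal_walk A lam vs ts \<Longrightarrow> vs \<noteq> []"
  by (induction A lam vs ts rule: temporal_walk.induct) auto

lemma temporal_walk_append_iff:
  "temporal_walk A lam (xs @ a # ys) ts \<longleftrightarrow>
     (\<exists>ts1 ts2. ts = ts1 @ ts2 \<and> temporal_walk A lam (xs @ [a]) ts1 \<and>
        temporal_walk A lam (a # ys) ts2 \<and> (\<forall>s\<in>set ts1. \<forall>t\<in>set ts2. s < t))"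
proof (induction xs arbitrary: ts)
  case Nil
  show ?case by auto
next
  case (Cons y xs)
  obtain b bs where b: "xs @ [a] = b # bs" "xs @ a # ys = b # bs @ ys"
    by (cases xs) auto
  show ?case
  proof
    assume "temporal_walk A lam ((y # xs) @ a # ys) ts"
    then obtain t ts' where ts: "ts = t # ts'" "(y, b) \<in> A" "t \<in> lam (y, b)"
        "temporal_walk A lam (xs @ a # ys) ts'" "\<forall>t'\<in>set ts'. t < t'"
      using b by (cases ts) auto
    then obtain ts1 ts2 where "ts' = ts1 @ ts2" "temporal_walk A lam (xs @ [a]) ts1"
        "temporal_walk A lam (a # ys) ts2" "\<forall>s\<in>set ts1. \<forall>t\<in>set ts2. s < t"
      using Cons.IH by blast
    with ts b show "\<exists>ts1 ts2. ts = ts1 @ ts2 \<and> temporal_walk A lam ((y # xs) @ [a]) ts1 \<and>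
        temporal_walk A lam (a # ys) ts2 \<and> (\<forall>s\<in>set ts1. \<forall>t\<in>set ts2. s < t)"
      by (intro exI[of _ "t # ts1"] exI[of _ ts2]) auto
  next
    assume "\<exists>ts1 ts2. ts = ts1 @ ts2 \<and> temporal_walk A lam ((y # xs) @ [a]) ts1 \<and>
        temporal_walk A lam (a # ys) ts2 \<and> (\<forall>s\<in>set ts1. \<forall>t\<in>set ts2. s < t)"
    then obtain ts1 ts2 where split: "ts = ts1 @ ts2" "temporal_walk A lam ((y # xs) @ [a]) ts1"
        "temporal_walk A lam (a # ys) ts2" "\<forall>s\<in>set ts1. \<forall>t\<in>set ts2. s < t"
      by blast
    then obtain t ts1' where ts1: "ts1 = t # ts1'"
      using b by (cases ts1) auto
    from split(2)[unfolded ts1 append_Cons b(1) temporal_walk.simps(2)]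
    have first: "(y, b) \<in> A" "t \<in> lam (y, b)" "temporal_walk A lam (xs @ [a]) ts1'"
      "\<forall>t'\<in>set ts1'. t < t'"
      using b(1) by auto
    with split ts1 have "temporal_walk A lam (xs @ a # ys) (ts1' @ ts2)"
      using Cons.IH by auto
    with first split(4) show "temporal_walk A lam ((y # xs) @ a # ys) ts"
      unfolding split(1) ts1 append_Cons b(2) by (auto simp del: append.simps)
  qed
qed

lemma temporal_walk_append:
  assumes "temporal_walk A lam (xs @ [a]) ts1" "temporal_walk A lam (a # ys) ts2"
    and "\<forall>s\<in>set ts1. \<forall>t\<in>set ts2. s < t"
  shows "temporal_walk A lam (xs @ a # ys) (ts1 @ ts2)"
  using assms by (subst temporal_walk_append_iff) blast

lemma temporal_walk_shortcut:
  "temporal_walk A lam vs ts \<Longrightarrow>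
     \<exists>vs' ts'. temporal_walk A lam vs' ts' \<and> distinct vs' \<and> hd vs' = hd vs \<and> last vs' = last vs \<and>
       set ts' \<subseteq> set ts"
proof (induction A lam vs ts rule: temporal_walk.induct)
  case (1 A lam v)
  show ?case by (intro exI[of _ "[v]"] exI[of _ "[]"]) simp
next
  case (2 A lam v w vs t ts)
  then obtain ws ts' where "temporal_walk A lam ws ts'" "distinct ws" "hd ws = w"
      "last ws = last (w # vs)" "set ts' \<subseteq> set ts"
    by (metis list.sel(1) temporal_walk.simps(2))
  moreover from this obtain vs' where "ws = w # vs'"
    by (metis list.collapse temporal_walk_not_Nil)
  ultimately have walk': "temporal_walk A lam (w # vs') ts'" "distinct (w # vs')"
      "last (w # vs') = last (w # vs)" and t_first: "\<forall>t'\<in>set ts'. t < t'"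
    using "2.prems" by auto
  show ?case
  proof (cases "v \<in> set (w # vs')")
    case False
    with "2.prems" walk' t_first \<open>set ts' \<subseteq> set ts\<close> show ?thesis
      by (intro exI[of _ "v # w # vs'"] exI[of _ "t # ts'"]) auto
  next
    case True
    then obtain xs ys where "w # vs' = xs @ v # ys"
      by (meson split_list)
    with walk' have "temporal_walk A lam (xs @ v # ys) ts'"
      by simp
    then obtain ts1 ts2 where "ts' = ts1 @ ts2" "temporal_walk A lam (v # ys) ts2"
      by (blast dest: temporal_walk_append_iff[THEN iffD1])
    moreover have "distinct (v # ys)" "last (v # ys) = last (v # w # vs)"
      using walk' \<open>w # vs' = xs @ v # ys\<close> by (auto simp: last_append)
    ultimately show ?thesis
      using \<open>set ts' \<subseteq> set ts\<close> by (intro exI[of _ "v # ys"] exI[of _ ts2]) auto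
  qed
qed simp_all

lemma temporal_walk_imp_path:
  assumes "temporal_walk A lam vs ts"
  shows "\<exists>ps pt. temporal_path_from_to A lam (hd vs) (last vs) ps pt"
  using temporal_walk_shortcut[OF assms]
  unfolding temporal_path_from_to_def temporal_path_iff_walk_distinct by blast

lemma temporal_path_from_to_split:
  assumes "temporal_path_from_to A lam u v (xs @ a # ys) ts"
  obtains ts1 ts2 where "temporal_walk A lam (xs @ [a]) ts1"
    "temporal_walk A lam (a # ys) ts2" "\<forall>s\<in>set ts1. \<forall>t\<in>set ts2. s < t"
    "hd (xs @ [a]) = u" "last (a # ys) = v"
proof -
  from assms have "temporal_walk A lam (xs @ a # ys) ts" "hd (xs @ [a]) = u" "last (a # ys) = v"
    unfolding temporal_path_from_to_def temporal_path_iff_walk_distinct by (auto simp: hd_append)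
  with that show thesis
    using temporal_walk_append_iff by metis
qed

lemma temporal_paths_exchange_at_common_vertex:
  assumes P: "temporal_path_from_to A lam u v ps pt"
    and Q: "temporal_path_from_to A lam w x qs qt"
    and common: "a \<in> set ps" "a \<in> set qs"
  shows "(\<exists>ps pt. temporal_path_from_to A lam u x ps pt) \<or>
         (\<exists>ps pt. temporal_path_from_to A lam w v ps pt)"
proof -
  obtain xs ys xs' ys' where "ps = xs @ a # ys" "qs = xs' @ a # ys'"
    using common by (meson split_list)
  obtain pt1 pt2 where P_split: "temporal_walk A lam (xs @ [a]) pt1"
      "temporal_walk A lam (a # ys) pt2" "\<forall>s\<in>set pt1. \<forall>t\<in>set pt2. s < t"
      "hd (xs @ [a]) = u" "last (a # ys) = v"
    using temporal_path_from_to_split[OF P[unfolded \<open>ps = xs @ a # ys\<close>]] .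
  obtain qt1 qt2 where Q_split: "temporal_walk A lam (xs' @ [a]) qt1"
      "temporal_walk A lam (a # ys') qt2" "\<forall>s\<in>set qt1. \<forall>t\<in>set qt2. s < t"
      "hd (xs' @ [a]) = w" "last (a # ys') = x"
    using temporal_path_from_to_split[OF Q[unfolded \<open>qs = xs' @ a # ys'\<close>]] .
  have "(\<forall>s\<in>set pt1. \<forall>t\<in>set qt2. s < t) \<or> (\<forall>s\<in>set qt1. \<forall>t\<in>set pt2. s < t)"
    using P_split(3) Q_split(3) by (meson le_less_trans less_le_trans less_asym not_less)
  then show ?thesis
  proof
    assume "\<forall>s\<in>set pt1. \<forall>t\<in>set qt2. s < t"
    with P_split(1) Q_split(2) have "temporal_walk A lam (xs @ a # ys') (pt1 @ qt2)"
      by (rule temporal_walk_append)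
    moreover have "hd (xs @ a # ys') = u" "last (xs @ a # ys') = x"
      using P_split(4) Q_split(5) by (cases xs; simp)+
    ultimately show ?thesis
      using temporal_walk_imp_path by metis
  next
    assume "\<forall>s\<in>set qt1. \<forall>t\<in>set pt2. s < t"
    with Q_split(1) P_split(2) have "temporal_walk A lam (xs' @ a # ys) (qt1 @ pt2)"
      by (rule temporal_walk_append)
    moreover have "hd (xs' @ a # ys) = w" "last (xs' @ a # ys) = v"
      using Q_split(4) P_split(5) by (cases xs'; simp)+
    ultimately show ?thesis
      using temporal_walk_imp_path by metis
  qed
qed

theorem mainTheorem6:
  fixes V :: "'a set" and A :: "('a \<times> 'a) set" and lam :: "'a \<times> 'a \<Rightarrow> nat set"
    and tmax :: nat and u v w x :: 'a
  assumes "temporal_oriented_tree V A lam tmax"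
    and "u \<in> V" and "v \<in> V" and "w \<in> V" and "x \<in> V"
    and "distinct [u, v, w, x]"
    and "\<exists>ps pt. temporal_path_from_to A lam u v ps pt"
    and "\<exists>qs qt. temporal_path_from_to A lam w x qs qt"
    and "\<forall>ps pt qs qt. temporal_path_from_to A lam u v ps pt \<longrightarrow>
           temporal_path_from_to A lam w x qs qt \<longrightarrow> set ps \<inter> set qs \<noteq> {}"
  shows "(\<exists>ps pt. temporal_path_from_to A lam u x ps pt) \<or>
         (\<exists>ps pt. temporal_path_from_to A lam w v ps pt)"
proof -
  obtain ps pt qs qt where P: "temporal_path_from_to A lam u v ps pt"
    and Q: "temporal_path_from_to A lam w x qs qt"
    using assms(7,8) by blast
  then obtain a where "a \<in> set ps" "a \<in> set qs"
    using assms(9) by blast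
  with P Q show ?thesis
    by (rule temporal_paths_exchange_at_common_vertex)
qed

end
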